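(* Let $V$ be a vector space (of arbitrary dimension) over a field $K$, let $R=\mathrm{End}_K(V)$, and let $a\in R$. Then there exists an idempotent $e\in aRa$ such that $(a(1-e))^2=0$.
   Context: Elements of $\mathrm{End}_K(V)$ act on the left of $V$, and the ring multiplication is composition. *)

theory Defs
  imports Complex_Main
begin

text \<open>The endomorphism ring End_K(V) of a vector space given by the scalar
multiplication scale: the K-linear maps V to V, multiplication = composition.\<close>
definition End_ring :: "('k::field \<Rightarrow> 'v::ab_group_add \<Rightarrow> 'v) \<Rightarrow> ('v \<Rightarrow> 'v) set" where
  "End_ring scale = {f. Vector_Spaces.linear scale scale f}"

end

theory Submission
  imports Defs
begin

text \<open>Let \<open>S\<close> be a complement of \<open>range a \<inter> ker a\<close> inside \<open>range a\<close>. Then \<open>a\<close> is injective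
  on \<open>S\<close> and \<open>a ` S = a ` range a\<close>, so a linear left inverse \<open>h\<close> of \<open>a\<close> on \<open>S\<close> with values
  in \<open>S\<close> gives the idempotent \<open>e = h \<circ> a\<close>. It lies in \<open>a R a\<close> because \<open>h\<close> takes values in
  \<open>range a\<close>, where \<open>a \<circ> g\<close> is the identity for any \<open>g\<close> with \<open>a \<circ> g \<circ> a = a\<close>. Finally, for
  \<open>z \<in> range a\<close> we have \<open>a (e z) = a z\<close>, so \<open>a (1 - e)\<close> kills \<open>range a \<supseteq> range (a (1 - e))\<close>.\<close>

lemma (in vector_space) exists_complement_subspace_within:
  assumes "subspace K" "subspace U" "K \<subseteq> U"
  shows "\<exists>S. subspace S \<and> S \<subseteq> U \<and> S \<inter> K \<subseteq> {0} \<and> U \<subseteq> {k + s |k s. k \<in> K \<and> s \<in> S}"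
proof -
  interpret P: vector_space_pair scale scale by unfold_locales
  obtain B0 where B0: "B0 \<subseteq> K" "independent B0" "K \<subseteq> span B0"
    by (rule maximal_independent_subset)
  obtain B1 where B1: "B0 \<subseteq> B1" "B1 \<subseteq> U" "independent B1" "U \<subseteq> span B1"
    using B0 assms(3) maximal_independent_subset_extend by (metis order_trans)
  have span_B0: "span B0 = K"
    using B0 assms(1) span_minimal by blast
  define S where "S = span (B1 - B0)"
  \<comment> \<open>the projection onto \<open>span B0\<close> along \<open>S\<close> separates the two spans\<close>
  define p where "p = P.construct B1 (\<lambda>b. if b \<in> B0 then b else 0)"
  have lin_p: "Vector_Spaces.linear scale scale p"
    unfolding p_def using B1(3) by (rule P.linear_construct)
  have "x = 0" if "x \<in> S" "x \<in> K" for x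
  proof -
    have "p x = x"
    proof (rule P.linear_eq_on[OF lin_p linear_id[unfolded id_def]])
      show "x \<in> span B0" using \<open>x \<in> K\<close> span_B0 by simp
      show "p b = b" if "b \<in> B0" for b
        using that B1(1,3) by (auto simp: p_def P.construct_basis)
    qed
    moreover have "p x = 0"
    proof (rule P.linear_eq_on[OF lin_p P.linear_zero])
      show "x \<in> span (B1 - B0)" using \<open>x \<in> S\<close> by (simp add: S_def)
      show "p b = 0" if "b \<in> B1 - B0" for b
        using that B1(3) by (simp add: p_def P.construct_basis)
    qed
    ultimately show ?thesis by simp
  qed
  moreover have "S \<subseteq> U"
    unfolding S_def using B1(2) by (intro span_minimal assms(2)) blast
  moreover have "U \<subseteq> {k + s |k s. k \<in> K \<and> s \<in> S}"
  proof -
    have "B0 \<union> (B1 - B0) = B1"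
      using B1(1) by blast
    then have "span B1 = {k + s |k s. k \<in> K \<and> s \<in> S}"
      using span_Un[of B0 "B1 - B0"] by (simp add: span_B0 S_def)
    then show ?thesis
      using B1(4) by simp
  qed
  ultimately show ?thesis
    unfolding S_def by blast
qed

lemma (in vector_space) exists_subspace_of_range_inj_on_with_same_image:
  assumes "Vector_Spaces.linear scale scale a"
  shows "\<exists>S. subspace S \<and> S \<subseteq> range a \<and> inj_on a S \<and> a ` range a \<subseteq> a ` S"
proof -
  interpret A: Vector_Spaces.linear scale scale a by fact
  define K where "K = range a \<inter> {x. a x = 0}"
  have range_subspace: "subspace (range a)"
    by (rule A.subspace_image) (rule subspace_UNIV)
  have kernel_subspace: "subspace K"
    unfolding K_def using range_subspace A.subspace_kernel by (rule subspace_inter)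
  have kernel_range: "K \<subseteq> range a"
    unfolding K_def by (rule Int_lower1)
  obtain S where S: "subspace S" "S \<subseteq> range a" "S \<inter> K \<subseteq> {0}"
      and range_a: "range a \<subseteq> {k + s |k s. k \<in> K \<and> s \<in> S}"
    using exists_complement_subspace_within[OF kernel_subspace range_subspace kernel_range]
    by (elim exE conjE)
  have "inj_on a S"
  proof (rule A.inj_on_iff_eq_0[OF S(1), THEN iffD2], intro ballI impI)
    fix s assume "s \<in> S" "a s = 0"
    then have "s \<in> S \<inter> K"
      using S(2) by (auto simp: K_def)
    then show "s = 0"
      using S(3) by blast
  qed
  moreover have "a ` range a \<subseteq> a ` S"
  proof
    fix y assume "y \<in> a ` range a"
    then obtain x where "y = a x" "x \<in> range a"
      by blast
    have "x \<in> {k + s |k s. k \<in> K \<and> s \<in> S}"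
      using range_a \<open>x \<in> range a\<close> by (rule subsetD)
    then obtain k s where "x = k + s" "k \<in> K" "s \<in> S"
      by blast
    then have "y = a (k + s)"
      using \<open>y = a x\<close> by simp
    moreover have "a k = 0"
      using \<open>k \<in> K\<close> by (simp add: K_def)
    ultimately have "y = a s"
      by (simp add: A.add)
    then show "y \<in> a ` S"
      using \<open>s \<in> S\<close> by blast
  qed
  ultimately show ?thesis
    using S(1,2) by blast
qed

lemma (in vector_space) exists_idempotent_left_inverse_through_range:
  assumes "Vector_Spaces.linear scale scale a"
  shows "\<exists>h. Vector_Spaces.linear scale scale h \<and> range h \<subseteq> range a \<and>
    (h \<circ> a) \<circ> (h \<circ> a) = h \<circ> a \<and> (\<forall>z\<in>range a. a (h (a z)) = a z)"
proof -
  interpret P: vector_space_pair scale scale by unfold_locales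
  obtain S where S: "subspace S" "S \<subseteq> range a" "inj_on a S" "a ` range a \<subseteq> a ` S"
    using exists_subspace_of_range_inj_on_with_same_image[OF assms] by (elim exE conjE)
  obtain h where h: "range h \<subseteq> S" "Vector_Spaces.linear scale scale h" "\<forall>s\<in>S. h (a s) = s"
    using P.linear_exists_left_inverse_on[OF assms S(1,3)] by (elim exE conjE)
  have "(h \<circ> a) \<circ> (h \<circ> a) = h \<circ> a"
  proof
    fix x
    have "h (a x) \<in> S"
      using h(1) by blast
    then show "((h \<circ> a) \<circ> (h \<circ> a)) x = (h \<circ> a) x"
      using h(3) by simp
  qed
  moreover have "a (h (a z)) = a z" if "z \<in> range a" for z
  proof -
    have "a z \<in> a ` S"
      using that S(4) by blast
    then obtain s where "s \<in> S" "a z = a s"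
      by (rule imageE)
    then show ?thesis
      using h(3) by simp
  qed
  ultimately show ?thesis
    using h(1,2) S(2) by blast
qed

lemma (in vector_space) comp_in_corner_if_range_subset:
  assumes "Vector_Spaces.linear scale scale a" "Vector_Spaces.linear scale scale h"
    and "range h \<subseteq> range a"
  shows "h \<circ> a \<in> (\<lambda>r. a \<circ> r \<circ> a) ` End_ring scale"
proof -
  interpret P: vector_space_pair scale scale by unfold_locales
  obtain g where g: "Vector_Spaces.linear scale scale g" "\<forall>y\<in>range a. a (g y) = y"
    using P.linear_exists_right_inverse_on[OF assms(1) subspace_UNIV] by (elim exE conjE)
  have "g \<circ> h \<in> End_ring scale"
    using Vector_Spaces.linear_compose[OF assms(2) g(1)] by (simp add: End_ring_def)
  moreover have "h \<circ> a = a \<circ> (g \<circ> h) \<circ> a"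
  proof
    fix x
    have "h (a x) \<in> range a"
      using assms(3) by blast
    then obtain y where "h (a x) = a y"
      by (rule rangeE)
    then show "(h \<circ> a) x = (a \<circ> (g \<circ> h) \<circ> a) x"
      using g(2) by simp
  qed
  ultimately show ?thesis
    by (auto intro: image_eqI[where x = "g \<circ> h"])
qed

theorem lemma2p9:
  fixes scale :: "'k::field \<Rightarrow> 'v::ab_group_add \<Rightarrow> 'v" and a :: "'v \<Rightarrow> 'v"
  assumes "vector_space scale"
    and "a \<in> End_ring scale"
  shows "\<exists>e. e \<in> (\<lambda>r. a \<circ> r \<circ> a) ` End_ring scale \<and> e \<circ> e = e \<and>
    (\<lambda>x. a (x - e x)) \<circ> (\<lambda>x. a (x - e x)) = (\<lambda>x. 0)"
proof -
  interpret V: vector_space scale by fact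
  have lin_a: "Vector_Spaces.linear scale scale a"
    using assms(2) by (simp add: End_ring_def)
  interpret A: Vector_Spaces.linear scale scale a by (fact lin_a)
  obtain h where h: "Vector_Spaces.linear scale scale h" "range h \<subseteq> range a"
      "(h \<circ> a) \<circ> (h \<circ> a) = h \<circ> a" "\<forall>z\<in>range a. a (h (a z)) = a z"
    using V.exists_idempotent_left_inverse_through_range[OF lin_a] by (elim exE conjE)
  have kills_range: "a (z - h (a z)) = 0" if "z \<in> range a" for z
    using h(4)[rule_format, OF that] by (simp add: A.diff)
  have "(\<lambda>x. a (x - (h \<circ> a) x)) \<circ> (\<lambda>x. a (x - (h \<circ> a) x)) = (\<lambda>x. 0)"
    using kills_range by auto
  then show ?thesis
    using V.comp_in_corner_if_range_subset[OF lin_a h(1,2)] h(3) by blast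
qed

end
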